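(* Let $\mu$ be a positive Borel measure on $\mathbb H^m$, and let $r_1,\dots,r_m>n$ and $\tau_1,\dots,\tau_m>0$. Then $\mu$ is an $(r_1,\dots,r_m)$-Carleson measure if and only if $$\|\mu\|^\ast_{(r_1,\dots,r_m)}=\sup_{w_1,\dots,w_m\in\mathbb H}\int_{\mathbb H_{w_1}}\cdots\int_{\mathbb H_{w_m}}\prod_{j=1}^m\frac{s_j^{\tau_j}}{|z_j-\overline w_j|^{r_j+\tau_j}}\,d\mu(z_1,\dots,z_m)<\infty,$$ where $w_j=(y_j,s_j)$ and $\mathbb H_{w_j}=\{(x,t)\in\mathbb H: t\le3s_j\}$. Moreover, $\|\mu\|_{(r_1,\dots,r_m)}\asymp\|\mu\|^\ast_{(r_1,\dots,r_m)}$.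
   Context: $\mathbb H=\{(x,t): x\in\mathbb R^n,\ t>0\}\subset\mathbb R^{n+1}$, and $\overline w=(y,-s)$ for $w=(y,s)$. For $w=(y,s)\in\mathbb H$, $Q_w$ is the cube with sides parallel to the axes, centered at $w$, with side length $s$. A positive Borel measure $\mu$ on $\mathbb H^m$ is an $(r_1,\dots,r_m)$-Carleson measure ($r_j>0$) if $$\|\mu\|_{(r_1,\dots,r_m)}=\sup_{w_1,\dots,w_m\in\mathbb H}\frac{\mu(Q_{w_1}\times\cdots\times Q_{w_m})}{s_1^{r_1}\cdots s_m^{r_m}}<\infty,\qquad w_j=(y_j,s_j).$$ *)

theory Defs
  imports "HOL-Analysis.Analysis"
begin

text \<open>Points of R^{n+1} are pairs (x,t) with x :: real^'n, t :: real; the dimension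
  n is CARD('n). Points of (R^{n+1})^m are vectors indexed by a finite type 'm (m = CARD('m)).\<close>

type_synonym 'n pt = "(real ^ 'n) \<times> real"

definition upper_half :: "'n::finite pt set" where
  "upper_half = {(x, t). t > 0}"

definition conj_pt :: "'n::finite pt \<Rightarrow> 'n pt" where
  "conj_pt w = (fst w, - snd w)"

definition cube :: "'n::finite pt \<Rightarrow> 'n pt set" where
  "cube w = {(x, t). (\<forall>i. \<bar>x $ i - fst w $ i\<bar> \<le> snd w / 2) \<and> \<bar>t - snd w\<bar> \<le> snd w / 2}"

definition Hw :: "'n::finite pt \<Rightarrow> 'n pt set" where
  "Hw w = {(x, t). 0 < t \<and> t \<le> 3 * snd w}"

definition upper_half_prod :: "('n::finite pt ^ 'm::finite) set" where
  "upper_half_prod = {z. \<forall>j. z $ j \<in> upper_half}"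

definition borel_measure_on_Hm :: "('n::finite pt ^ 'm::finite) measure \<Rightarrow> bool" where
  "borel_measure_on_Hm \<mu> \<longleftrightarrow> sets \<mu> = sets borel \<and> emeasure \<mu> (UNIV - upper_half_prod) = 0"

definition carleson_norm ::
  "('m::finite \<Rightarrow> real) \<Rightarrow> ('n::finite pt ^ 'm) measure \<Rightarrow> ennreal" where
  "carleson_norm r \<mu> =
     (SUP w \<in> upper_half_prod.
        emeasure \<mu> {z. \<forall>j. z $ j \<in> cube (w $ j)} / (\<Prod>j\<in>UNIV. ennreal (snd (w $ j) powr r j)))"

definition carleson_star_norm ::
  "('m::finite \<Rightarrow> real) \<Rightarrow> ('m \<Rightarrow> real) \<Rightarrow> ('n::finite pt ^ 'm) measure \<Rightarrow> ennreal" where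
  "carleson_star_norm r \<tau> \<mu> =
     (SUP w \<in> upper_half_prod.
        \<integral>\<^sup>+ z \<in> {z. \<forall>j. z $ j \<in> Hw (w $ j)}.
          ennreal (\<Prod>j\<in>UNIV. snd (w $ j) powr \<tau> j
                      / norm (z $ j - conj_pt (w $ j)) powr (r j + \<tau> j)) \<partial>\<mu>)"

end

theory Submission
  imports Defs "HOL-Library.Nat_Bijection"
begin

text \<open>Write \<open>w = (y, s)\<close> and \<open>K(z) = s\<^sup>\<tau> / |z - conj_pt w|\<^sup>r\<^sup>+\<^sup>\<tau>\<close>. On the cube \<open>Q\<^sub>w \<subseteq> H\<^sub>w\<close>
  the distance \<open>|z - conj_pt w|\<close> is at most \<open>(n + 3) s\<close>, so \<open>K \<ge> (n + 3)\<^sup>-\<^sup>r\<^sup>-\<^sup>\<tau> s\<^sup>-\<^sup>r\<close> there;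
  taking products over the \<open>m\<close> factors bounds the Carleson norm by the starred one.
  Conversely, \<open>H\<^sub>w\<close> is covered by the layers \<open>i = 0, 1, \<dots>\<close> of cubes of side \<open>h = 2 s / 2\<^sup>i\<close>
  at height \<open>h\<close>, centred on the lattice \<open>y + h \<int>\<^sup>n\<close>. On the cube with lattice index \<open>L\<close> the
  kernel is of the order of \<open>s\<^sup>\<tau> \<Prod>\<^sub>l max s (h |L\<^sub>l|)\<^sup>-\<^sup>q\<close>, where \<open>q n = r + \<tau>\<close>, so
  the Carleson condition bounds the integral over \<open>H\<^sub>w\<close> by the Carleson norm times the sum
  of these bounds times \<open>h\<^sup>r\<close>. Since \<open>q > 1\<close> the sum over \<open>L\<close> factorises into convergent
  one-dimensional sums, each of size \<open>\<approx> s\<^sup>-\<^sup>q 2\<^sup>i\<close>, and the resulting sum over the layers is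
  geometric with ratio \<open>2\<^sup>n\<^sup>-\<^sup>r < 1\<close>.\<close>

lemma nn_integral_count_space_prod:
  fixes f :: "'a::finite \<Rightarrow> 'b::countable \<Rightarrow> ennreal"
  shows "(\<integral>\<^sup>+\<kappa>. (\<Prod>j\<in>UNIV. f j (\<kappa> j)) \<partial>count_space UNIV)
           = (\<Prod>j\<in>UNIV. \<integral>\<^sup>+k. f j k \<partial>count_space UNIV)"
proof -
  interpret product_sigma_finite "\<lambda>_::'a. count_space (UNIV::'b set)"
    by (intro product_sigma_finite.intro sigma_finite_measure_count_space_countable) auto
  have "PiM UNIV (\<lambda>_::'a. count_space (UNIV::'b set)) = count_space (PiE UNIV (\<lambda>_. UNIV))"
    by (rule count_space_PiM_finite) auto
  moreover have "PiE (UNIV::'a set) (\<lambda>_. UNIV::'b set) = UNIV"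
    by (auto simp: PiE_def extensional_def)
  ultimately show ?thesis
    using product_nn_integral_prod[of UNIV f] by simp
qed

definition tail_const :: "real \<Rightarrow> real" where
  "tail_const q = 2 powr q * (\<Sum>j. real (Suc j) powr (-q))"

lemma summable_Suc_powr: "1 < q \<Longrightarrow> summable (\<lambda>j. real (Suc j) powr (-q))"
  using summable_Suc_iff[of "\<lambda>n. real n powr (-q)"] summable_real_powr_iff[of "-q"] by simp

lemma tail_const_nonneg: "1 < q \<Longrightarrow> 0 \<le> tail_const q"
  unfolding tail_const_def by (intro mult_nonneg_nonneg suminf_nonneg summable_Suc_powr) auto

text \<open>Group the terms into blocks of length \<open>M\<close>: the \<open>j\<close>-th block has \<open>M\<close> terms of size
  at most \<open>(M (j + 1) / 2) powr -q\<close>.\<close>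
lemma nn_integral_max_powr_le:
  fixes M :: nat
  assumes q: "1 < q" and M: "1 \<le> M"
  shows "(\<integral>\<^sup>+k. ennreal (max (real M) (real k + 1) powr (-q)) \<partial>count_space UNIV)
          \<le> ennreal (tail_const q * real M * real M powr (-q))"
proof -
  define \<phi> where "\<phi> k = max (real M) (real k + 1) powr (-q)" for k :: nat
  define Z where "Z j = real (Suc j) powr (-q)" for j :: nat
  have sZ: "summable Z" unfolding Z_def using q by (rule summable_Suc_powr)
  have \<phi>_nonneg: "0 \<le> \<phi> k" for k unfolding \<phi>_def by simp
  have "\<phi> k \<le> Z k" for k
    unfolding \<phi>_def Z_def by (rule powr_mono2') (use q in auto)
  then have s\<phi>: "summable \<phi>"
    using \<phi>_nonneg by (intro summable_comparison_test'[OF sZ, of 0]) auto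
  have Mp: "0 < real M" using M by simp
  have term_le: "\<phi> k \<le> 2 powr q * real M powr (-q) * Z j" if "k \<in> {j*M..<j*M+M}" for j k
  proof -
    have "real j * real M \<le> real k"
      using that by (simp flip: of_nat_mult)
    then have "real M * (real j + 1) / 2 \<le> max (real M) (real k + 1)"
    proof (cases "j = 0")
      case False
      then have "real M * (real j + 1) / 2 \<le> real j * real M"
        using Mp by (simp add: field_simps)
      with \<open>real j * real M \<le> real k\<close> show ?thesis by linarith
    qed (use Mp in \<open>auto simp: max_def\<close>)
    then have "\<phi> k \<le> (real M * (real j + 1) / 2) powr (-q)"
      unfolding \<phi>_def by (intro powr_mono2') (use q Mp in auto)
    also have "\<dots> = 2 powr q * real M powr (-q) * Z j"
      unfolding Z_def using Mp by (simp add: powr_divide powr_mult powr_minus divide_simps add.commute)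
    finally show ?thesis .
  qed
  have block_le: "(\<Sum>k\<in>{j*M..<j*M+M}. \<phi> k) \<le> 2 powr q * real M * real M powr (-q) * Z j" for j
  proof -
    have "(\<Sum>k\<in>{j*M..<j*M+M}. \<phi> k) \<le> (\<Sum>k\<in>{j*M..<j*M+M}. 2 powr q * real M powr (-q) * Z j)"
      by (intro sum_mono term_le)
    then show ?thesis by (simp add: mult_ac)
  qed
  have "(\<lambda>j. \<Sum>k\<in>{j*M..<j*M+M}. \<phi> k) sums suminf \<phi>"
    by (rule sums_group) (use s\<phi> M in auto)
  moreover have "(\<lambda>j. 2 powr q * real M * real M powr (-q) * Z j)
                   sums (2 powr q * real M * real M powr (-q) * suminf Z)"
    using sZ by (intro sums_mult summable_sums)
  ultimately have "suminf \<phi> \<le> 2 powr q * real M * real M powr (-q) * suminf Z"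
    by (rule sums_le[OF block_le])
  moreover have "tail_const q = 2 powr q * suminf Z"
    unfolding tail_const_def Z_def ..
  ultimately show ?thesis
    by (simp add: \<phi>_def[symmetric] nn_integral_count_space_nat suminf_ennreal2 \<phi>_nonneg s\<phi>
                  ennreal_leI mult_ac)
qed

definition star_kernel :: "real \<Rightarrow> real \<Rightarrow> 'n::finite pt \<Rightarrow> 'n pt \<Rightarrow> real" where
  "star_kernel r \<tau> w z = snd w powr \<tau> / norm (z - conj_pt w) powr (r + \<tau>)"

lemma star_kernel_nonneg: "0 \<le> star_kernel r \<tau> w z"
  by (simp add: star_kernel_def)

lemma carleson_star_norm_eq:
  "carleson_star_norm r \<tau> \<mu> =
     (SUP w \<in> upper_half_prod. \<integral>\<^sup>+ z \<in> {z. \<forall>j. z $ j \<in> Hw (w $ j)}.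
        ennreal (\<Prod>j\<in>UNIV. star_kernel (r j) (\<tau> j) (w $ j) (z $ j)) \<partial>\<mu>)"
  unfolding carleson_star_norm_def star_kernel_def ..

lemma mem_upper_half_prod: "w \<in> upper_half_prod \<longleftrightarrow> (\<forall>j. 0 < snd (w $ j))"
  by (simp add: upper_half_prod_def upper_half_def case_prod_unfold)

lemma mem_cube:
  "z \<in> cube w \<longleftrightarrow> (\<forall>i. \<bar>fst z $ i - fst w $ i\<bar> \<le> snd w / 2) \<and> \<bar>snd z - snd w\<bar> \<le> snd w / 2"
  by (cases z) (simp add: cube_def)

lemma mem_Hw: "z \<in> Hw w \<longleftrightarrow> 0 < snd z \<and> snd z \<le> 3 * snd w"
  by (cases z) (simp add: Hw_def)

lemma diff_conj_pt: "z - conj_pt w = (fst z - fst w, snd z + snd w)"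
  by (simp add: conj_pt_def minus_prod_def)

lemma snd_le_norm_diff_conj:
  assumes "0 < snd z" "0 \<le> snd w"
  shows "snd w \<le> norm (z - conj_pt w)"
  using norm_snd_le[of "snd z + snd w" "fst z - fst w"] assms by (simp add: diff_conj_pt)

lemma component_le_norm_diff_conj: "\<bar>fst z $ l - fst w $ l\<bar> \<le> norm (z - conj_pt w)"
  using component_le_norm_cart[of "fst z - fst w" l] norm_fst_le[of "fst z - fst w" "snd z + snd w"]
  by (simp add: diff_conj_pt)

definition dyadic_side :: "real \<Rightarrow> nat \<Rightarrow> real" where
  "dyadic_side s i = 2 * s / 2 ^ i"

text \<open>The \<open>i\<close>-th layer of the covering of \<open>H_w\<close>, \<open>w = (y, s)\<close>, consists of the cubes of side
  \<open>h = 2 s / 2^i\<close> centred at the points \<open>(y + h K, h)\<close>, \<open>K \<in> \<int>\<^sup>n\<close>; the lattice \<open>\<int>\<^sup>n\<close> is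
  indexed by \<open>\<nat>\<^sup>n\<close> through \<open>int_decode\<close>.\<close>
definition dyadic_center :: "'n::finite pt \<Rightarrow> nat \<Rightarrow> ('n \<Rightarrow> nat) \<Rightarrow> 'n pt" where
  "dyadic_center w i k =
     ((\<chi> l. fst w $ l + dyadic_side (snd w) i * of_int (int_decode (k l))), dyadic_side (snd w) i)"

definition dyadic_bound :: "real \<Rightarrow> real \<Rightarrow> 'n::finite pt \<Rightarrow> nat \<Rightarrow> ('n \<Rightarrow> nat) \<Rightarrow> real" where
  "dyadic_bound q \<tau> w i k =
     snd w powr \<tau> * (\<Prod>l\<in>UNIV. max (snd w) (dyadic_side (snd w) i * (real (k l) + 1) / 8) powr (-q))"

lemma dyadic_bound_nonneg: "0 \<le> dyadic_bound q \<tau> w i k"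
  unfolding dyadic_bound_def by (intro mult_nonneg_nonneg prod_nonneg) auto

lemma exists_dyadic_layer:
  fixes s t :: real
  assumes "0 < s" "0 < t" "t \<le> 3 * s"
  shows "\<exists>i::nat. s / 2 ^ i \<le> t \<and> t \<le> 3 * s / 2 ^ i"
proof -
  obtain N :: nat where "s / t < 2 ^ N" using real_arch_pow[of 2 "s / t"] by auto
  then have ex: "\<exists>i::nat. s / 2 ^ i \<le> t"
    using assms by (intro exI[of _ N]) (simp add: field_simps)
  define i where "i = (LEAST i::nat. s / 2 ^ i \<le> t)"
  have lower: "s / 2 ^ i \<le> t" unfolding i_def by (rule LeastI_ex[OF ex])
  have "t \<le> 3 * s / 2 ^ i"
  proof (cases i)
    case (Suc i')
    then have "t < s / 2 ^ i'"
      using not_less_Least[of i' "\<lambda>i. s / 2 ^ i \<le> t"] unfolding i_def by auto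
    also have "\<dots> \<le> 3 * s / 2 ^ i" using Suc assms by (simp add: field_simps)
    finally show ?thesis by simp
  qed (use assms in simp)
  with lower show ?thesis by blast
qed

lemma exists_lattice_point_near:
  fixes d h :: real
  assumes "0 < h"
  shows "\<exists>k. \<bar>d - h * of_int (int_decode k)\<bar> \<le> h / 2 \<and> h * (real k + 1) \<le> 2 * (\<bar>d\<bar> + h)"
proof -
  define K where "K = round (d / h)"
  have "d - h * of_int K = - h * (of_int K - d / h)"
    using assms by (simp add: field_simps)
  moreover have "\<bar>of_int K - d / h\<bar> \<le> 1 / 2"
    unfolding K_def by (rule of_int_round_abs_le)
  ultimately have near: "\<bar>d - h * of_int K\<bar> \<le> h / 2"
    using assms by (simp add: abs_mult)
  have "real (int_encode K) \<le> 2 * \<bar>of_int K\<bar>"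
    by (cases "0 \<le> K") (auto simp: int_encode_def sum_encode_def of_nat_nat)
  then have "h * (real (int_encode K) + 1) \<le> 2 * \<bar>h * of_int K\<bar> + h"
    using mult_left_mono[of _ _ h] assms by (simp add: abs_mult algebra_simps)
  also have "\<dots> \<le> 2 * (\<bar>d\<bar> + h)"
    using near by (simp add: abs_le_iff abs_if split: if_splits)
  finally show ?thesis
    using near by (intro exI[of _ "int_encode K"]) simp
qed

lemma dyadic_cube_cover:
  assumes s: "0 < snd w" and z: "z \<in> Hw w"
  shows "\<exists>i k. z \<in> cube (dyadic_center w i k) \<and>
           (\<forall>l. max (snd w) (dyadic_side (snd w) i * (real (k l) + 1) / 8) \<le> norm (z - conj_pt w))"
proof -
  define D where "D = norm (z - conj_pt w)"
  have t: "0 < snd z" "snd z \<le> 3 * snd w" using z by (simp_all add: mem_Hw)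
  then obtain i where i: "snd w / 2 ^ i \<le> snd z" "snd z \<le> 3 * snd w / 2 ^ i"
    using exists_dyadic_layer[OF s] by blast
  define h where "h = dyadic_side (snd w) i"
  have h: "0 < h" "h \<le> 2 * snd w" "\<bar>snd z - h\<bar> \<le> h / 2"
    using i s by (auto simp: h_def dyadic_side_def field_simps)
  have "\<forall>l. \<exists>k. \<bar>(fst z $ l - fst w $ l) - h * of_int (int_decode k)\<bar> \<le> h / 2 \<and>
               h * (real k + 1) \<le> 2 * (\<bar>fst z $ l - fst w $ l\<bar> + h)"
    using exists_lattice_point_near[OF h(1)] by blast
  then obtain k where k:
    "\<And>l. \<bar>(fst z $ l - fst w $ l) - h * of_int (int_decode (k l))\<bar> \<le> h / 2"
    "\<And>l. h * (real (k l) + 1) \<le> 2 * (\<bar>fst z $ l - fst w $ l\<bar> + h)"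
    by metis
  have D: "snd w \<le> D" "\<And>l. \<bar>fst z $ l - fst w $ l\<bar> \<le> D"
    using snd_le_norm_diff_conj[OF t(1), of w] s component_le_norm_diff_conj[where z=z and w=w]
    by (auto simp: D_def)
  have "z \<in> cube (dyadic_center w i k)"
    using k(1) h(3) by (simp add: mem_cube dyadic_center_def h_def[symmetric] algebra_simps)
  moreover have "max (snd w) (h * (real (k l) + 1) / 8) \<le> D" for l
    using k(2)[of l] D(1) D(2)[of l] h by auto
  ultimately show ?thesis unfolding D_def h_def by blast
qed

lemma star_kernel_le_dyadic_bound:
  fixes w z :: "'n::finite pt"
  assumes s: "0 < snd w" and q: "0 \<le> q" and qn: "q * real CARD('n) = r + \<tau>"
    and near: "\<And>l. max (snd w) (dyadic_side (snd w) i * (real (k l) + 1) / 8) \<le> norm (z - conj_pt w)"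
  shows "star_kernel r \<tau> w z \<le> dyadic_bound q \<tau> w i k"
proof -
  define D where "D = norm (z - conj_pt w)"
  have D: "0 < D" using near[of undefined] s unfolding D_def by linarith
  have "star_kernel r \<tau> w z = snd w powr \<tau> * (\<Prod>l\<in>(UNIV::'n set). D powr (-q))"
    using D by (simp add: star_kernel_def D_def[symmetric] qn[symmetric] powr_minus
                          powr_powr[symmetric] powr_realpow divide_inverse power_inverse)
  also have "\<dots> \<le> dyadic_bound q \<tau> w i k"
    unfolding dyadic_bound_def
    using near s q by (intro mult_left_mono prod_mono conjI powr_mono2') (auto simp: D_def)
  finally show ?thesis .
qed

lemma dyadic_layer_const_eq:
  fixes s q r \<tau> T :: real and n i :: nat
  assumes s: "0 < s" and qn: "q * real n = r + \<tau>"
  shows "s powr \<tau> * dyadic_side s i powr r * (T * 2 ^ (i + 2) * s powr (-q)) ^ n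
           = T ^ n * 2 powr (r + 2 * real n) * (2 powr (real n - r)) ^ i"
proof -
  have "dyadic_side s i = s * 2 powr (1 - real i)"
    by (simp add: dyadic_side_def powr_diff powr_realpow)
  then have side: "dyadic_side s i powr r = s powr r * 2 powr ((1 - real i) * r)"
    using s by (simp add: powr_mult powr_powr)
  have "(2::real) ^ (i + 2) = 2 powr (real i + 2)"
    using powr_realpow[of 2 "i + 2"] by (simp add: add.commute)
  then have "(T * 2 ^ (i + 2) * s powr (-q)) ^ n
               = T ^ n * 2 powr ((real i + 2) * real n) * s powr (- (r + \<tau>))"
    using s by (simp add: power_mult_distrib powr_power qn[symmetric] mult_ac)
  moreover have "(2 powr (real n - r)) ^ i = (2::real) powr (real i * (real n - r))"
    by (simp add: powr_power)
  moreover have "s powr \<tau> * s powr r * s powr (- (r + \<tau>)) = 1"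
    using s by (simp add: powr_add[symmetric])
  moreover have "(2::real) powr ((1 - real i) * r) * 2 powr ((real i + 2) * real n)
                   = 2 powr (r + 2 * real n) * 2 powr (real i * (real n - r))"
    by (simp add: powr_add[symmetric] algebra_simps)
  ultimately show ?thesis
    unfolding side by (simp add: mult_ac)
qed

lemma nn_integral_dyadic_row_le:
  assumes s: "0 < s" and q: "1 < q"
  shows "(\<integral>\<^sup>+k. ennreal (max s (dyadic_side s i * (real k + 1) / 8) powr (-q)) \<partial>count_space UNIV)
           \<le> ennreal (tail_const q * 2 ^ (i + 2) * s powr (-q))"
proof -
  define M :: nat where "M = 2 ^ (i + 2)"
  define a where "a = dyadic_side s i / 8"
  have a: "0 < a" "a * real M = s"
    using s by (simp_all add: a_def M_def dyadic_side_def power_add)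
  have "max s (dyadic_side s i * (real k + 1) / 8) = a * max (real M) (real k + 1)" for k
    using a by (simp add: max_mult_distrib_left a_def)
  then have "max s (dyadic_side s i * (real k + 1) / 8) powr (-q)
               = a powr (-q) * max (real M) (real k + 1) powr (-q)" for k
    using a by (simp add: powr_mult)
  then have "(\<integral>\<^sup>+k. ennreal (max s (dyadic_side s i * (real k + 1) / 8) powr (-q)) \<partial>count_space UNIV)
               = ennreal (a powr (-q)) * (\<integral>\<^sup>+k. ennreal (max (real M) (real k + 1) powr (-q)) \<partial>count_space UNIV)"
    by (simp add: ennreal_mult nn_integral_cmult)
  also have "\<dots> \<le> ennreal (a powr (-q)) * ennreal (tail_const q * real M * real M powr (-q))"
    using nn_integral_max_powr_le[OF q, of M] by (intro mult_left_mono) (auto simp: M_def)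
  also have "\<dots> = ennreal (tail_const q * 2 ^ (i + 2) * s powr (-q))"
    using a tail_const_nonneg[OF q]
    by (simp add: ennreal_mult[symmetric] powr_mult[symmetric] M_def mult_ac)
  finally show ?thesis .
qed

lemma nn_integral_dyadic_layer_le:
  fixes w :: "'n::finite pt"
  assumes s: "0 < snd w" and q: "1 < q" and qn: "q * real CARD('n) = r + \<tau>"
  shows "(\<integral>\<^sup>+k. ennreal (dyadic_bound q \<tau> w i k * dyadic_side (snd w) i powr r)
            \<partial>count_space (UNIV :: ('n \<Rightarrow> nat) set))
           \<le> ennreal (tail_const q ^ CARD('n) * 2 powr (r + 2 * real CARD('n))
                       * (2 powr (real CARD('n) - r)) ^ i)"
proof -
  define c where "c = snd w powr \<tau> * dyadic_side (snd w) i powr r"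
  define f where "f k = max (snd w) (dyadic_side (snd w) i * (real k + 1) / 8) powr (-q)" for k :: nat
  define b where "b = tail_const q * 2 ^ (i + 2) * snd w powr (-q)"
  have b: "0 \<le> b" and c: "0 \<le> c"
    using tail_const_nonneg[OF q] by (simp_all add: b_def c_def)
  have "(\<integral>\<^sup>+k. ennreal (dyadic_bound q \<tau> w i k * dyadic_side (snd w) i powr r)
            \<partial>count_space (UNIV :: ('n \<Rightarrow> nat) set))
          = (\<integral>\<^sup>+k. ennreal c * (\<Prod>l\<in>(UNIV::'n set). ennreal (f (k l))) \<partial>count_space UNIV)"
    by (rule nn_integral_cong)
       (simp add: dyadic_bound_def c_def f_def prod_ennreal ennreal_mult'[symmetric] mult_ac)
  also have "\<dots> = ennreal c * (\<Prod>l\<in>(UNIV::'n set). \<integral>\<^sup>+k. ennreal (f k) \<partial>count_space UNIV)"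
    by (simp add: nn_integral_cmult nn_integral_count_space_prod[of "\<lambda>l k. ennreal (f k)"])
  also have "\<dots> \<le> ennreal c * (\<Prod>l\<in>(UNIV::'n set). ennreal b)"
    using nn_integral_dyadic_row_le[OF s q]
    by (intro mult_left_mono prod_mono_ennreal) (simp_all add: f_def b_def)
  also have "\<dots> = ennreal (c * b ^ CARD('n))"
    using b c by (simp add: ennreal_mult ennreal_power)
  also have "c * b ^ CARD('n) = tail_const q ^ CARD('n) * 2 powr (r + 2 * real CARD('n))
                                  * (2 powr (real CARD('n) - r)) ^ i"
    using dyadic_layer_const_eq[OF s qn] by (simp add: c_def b_def)
  finally show ?thesis .
qed

definition dyadic_const :: "real \<Rightarrow> real \<Rightarrow> nat \<Rightarrow> real" where
  "dyadic_const q r n = tail_const q ^ n * 2 powr (r + 2 * real n) / (1 - 2 powr (real n - r))"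

lemma dyadic_const_nonneg: "1 < q \<Longrightarrow> real n < r \<Longrightarrow> 0 \<le> dyadic_const q r n"
  unfolding dyadic_const_def using tail_const_nonneg[of q] powr_less_one[of 2 "real n - r"] by simp

lemma nn_integral_dyadic_le:
  fixes w :: "'n::finite pt"
  assumes s: "0 < snd w" and q: "1 < q" and qn: "q * real CARD('n) = r + \<tau>"
    and rn: "real CARD('n) < r"
  shows "(\<integral>\<^sup>+\<iota>. ennreal (dyadic_bound q \<tau> w (fst \<iota>) (snd \<iota>) * dyadic_side (snd w) (fst \<iota>) powr r)
            \<partial>count_space (UNIV :: (nat \<times> ('n \<Rightarrow> nat)) set))
           \<le> ennreal (dyadic_const q r CARD('n))"
proof -
  define E where "E = tail_const q ^ CARD('n) * 2 powr (r + 2 * real CARD('n))"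
  define \<rho> where "\<rho> = (2::real) powr (real CARD('n) - r)"
  have \<rho>: "0 \<le> \<rho>" "\<rho> < 1" unfolding \<rho>_def using rn by (auto intro: powr_less_one)
  have E: "0 \<le> E" unfolding E_def using tail_const_nonneg[OF q] by simp
  have "(\<integral>\<^sup>+\<iota>. ennreal (dyadic_bound q \<tau> w (fst \<iota>) (snd \<iota>) * dyadic_side (snd w) (fst \<iota>) powr r)
            \<partial>count_space (UNIV :: (nat \<times> ('n \<Rightarrow> nat)) set))
        = (\<integral>\<^sup>+i. \<integral>\<^sup>+k. ennreal (dyadic_bound q \<tau> w i k * dyadic_side (snd w) i powr r)
             \<partial>count_space (UNIV :: ('n \<Rightarrow> nat) set) \<partial>count_space UNIV)"
    by (simp add: nn_integral_fst_count_space[symmetric])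
  also have "\<dots> \<le> (\<integral>\<^sup>+i. ennreal (E * \<rho> ^ i) \<partial>count_space UNIV)"
    by (intro nn_integral_mono) (use nn_integral_dyadic_layer_le[OF s q qn] in \<open>simp add: E_def \<rho>_def\<close>)
  also have "\<dots> = ennreal (\<Sum>i. E * \<rho> ^ i)"
    using E \<rho> by (simp add: nn_integral_count_space_nat suminf_ennreal2 summable_geometric)
  also have "(\<Sum>i. E * \<rho> ^ i) = dyadic_const q r CARD('n)"
    using \<rho> by (simp add: suminf_mult suminf_geometric summable_geometric divide_inverse
                          dyadic_const_def E_def \<rho>_def)
  finally show ?thesis .
qed

lemma closed_prod_cube: "closed {z :: 'n::finite pt ^ 'm::finite. \<forall>j. z $ j \<in> cube (u j)}"
  unfolding mem_cube
  by (intro closed_Collect_all closed_Collect_conj closed_Collect_le continuous_intros)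

lemma sets_prod_cube:
  fixes \<mu> :: "('n::finite pt ^ 'm::finite) measure"
  assumes "sets \<mu> = sets borel"
  shows "{z. \<forall>j. z $ j \<in> cube (u j)} \<in> sets \<mu>"
  using borel_closed[OF closed_prod_cube] assms by simp

lemma emeasure_prod_cube_le_carleson_norm:
  fixes \<mu> :: "('n::finite pt ^ 'm::finite) measure" and u :: "'m \<Rightarrow> 'n pt"
  assumes u: "\<And>j. 0 < snd (u j)"
  shows "emeasure \<mu> {z. \<forall>j. z $ j \<in> cube (u j)}
           \<le> carleson_norm r \<mu> * (\<Prod>j\<in>UNIV. ennreal (snd (u j) powr r j))"
proof -
  define X where "X = emeasure \<mu> {z. \<forall>j. z $ j \<in> cube (u j)}"
  define P where "P = (\<Prod>j\<in>UNIV. snd (u j) powr r j)"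
  have P: "0 < P" unfolding P_def using u by (intro prod_pos) (simp add: less_imp_neq[symmetric])
  have "emeasure \<mu> {z. \<forall>j. z $ j \<in> cube ((\<chi> j. u j) $ j)}
          / (\<Prod>j\<in>UNIV. ennreal (snd ((\<chi> j. u j) $ j) powr r j)) \<le> carleson_norm r \<mu>"
    unfolding carleson_norm_def by (rule SUP_upper) (simp add: mem_upper_half_prod u)
  then have "X / ennreal P \<le> carleson_norm r \<mu>"
    by (simp add: X_def P_def prod_ennreal)
  then have "X / ennreal P * ennreal P \<le> carleson_norm r \<mu> * ennreal P"
    by (rule mult_right_mono) simp
  moreover have "X / ennreal P * ennreal P = X"
    using P by (simp add: ennreal_divide_times)
  ultimately show ?thesis
    by (simp add: X_def P_def prod_ennreal)
qed

text \<open>At every point of \<open>{z. \<forall>j. z $ j \<in> S j}\<close> the integrand is dominated by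
  \<open>\<Sum>\<^sub>\<kappa> (\<Prod>\<^sub>j c j (\<kappa> j)) \<cdot> indicator (Q \<kappa>)\<close>, where \<open>Q \<kappa>\<close> is the product of the cubes
  \<open>cube (center j (\<kappa> j))\<close>; integrate term by term and apply the Carleson condition to
  each \<open>Q \<kappa>\<close>.\<close>
lemma nn_integral_prod_le_carleson_norm:
  fixes \<mu> :: "('n::finite pt ^ 'm::finite) measure"
    and center :: "'m \<Rightarrow> 'i::countable \<Rightarrow> 'n pt" and c :: "'m \<Rightarrow> 'i \<Rightarrow> real"
  assumes \<mu>: "sets \<mu> = sets borel"
    and center: "\<And>j \<iota>. 0 < snd (center j \<iota>)"
    and c: "\<And>j \<iota>. 0 \<le> c j \<iota>"
    and f: "\<And>j x. x \<in> S j \<Longrightarrow> 0 \<le> f j x"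
    and cover: "\<And>j x. x \<in> S j \<Longrightarrow> \<exists>\<iota>. x \<in> cube (center j \<iota>) \<and> f j x \<le> c j \<iota>"
  shows "(\<integral>\<^sup>+z \<in> {z. \<forall>j. z $ j \<in> S j}. ennreal (\<Prod>j\<in>UNIV. f j (z $ j)) \<partial>\<mu>)
           \<le> carleson_norm r \<mu> *
              (\<Prod>j\<in>UNIV. \<integral>\<^sup>+\<iota>. ennreal (c j \<iota> * snd (center j \<iota>) powr r j) \<partial>count_space UNIV)"
proof -
  define Q where "Q \<kappa> = {z. \<forall>j. z $ j \<in> cube (center j (\<kappa> j))}" for \<kappa> :: "'m \<Rightarrow> 'i"
  define F where "F \<kappa> z = ennreal (\<Prod>j\<in>UNIV. c j (\<kappa> j)) * indicator (Q \<kappa>) z"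
    for \<kappa> :: "'m \<Rightarrow> 'i" and z :: "'n pt ^ 'm"
  have Q[measurable]: "Q \<kappa> \<in> sets \<mu>" for \<kappa>
    unfolding Q_def by (rule sets_prod_cube[OF \<mu>])
  have dominated: "ennreal (\<Prod>j\<in>UNIV. f j (z $ j)) * indicator {z. \<forall>j. z $ j \<in> S j} z
                     \<le> (\<integral>\<^sup>+\<kappa>. F \<kappa> z \<partial>count_space UNIV)" for z
  proof (cases "\<forall>j. z $ j \<in> S j")
    case True
    then have "\<forall>j. \<exists>\<iota>. z $ j \<in> cube (center j \<iota>) \<and> f j (z $ j) \<le> c j \<iota>"
      using cover by blast
    then obtain \<kappa> where \<kappa>: "\<And>j. z $ j \<in> cube (center j (\<kappa> j))" "\<And>j. f j (z $ j) \<le> c j (\<kappa> j)"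
      by metis
    moreover have "0 \<le> f j (z $ j)" for j
      using True f by blast
    ultimately have "ennreal (\<Prod>j\<in>UNIV. f j (z $ j)) \<le> F \<kappa> z"
      by (auto simp: F_def Q_def intro!: ennreal_leI prod_mono)
    also have "\<dots> \<le> (\<integral>\<^sup>+\<kappa>. F \<kappa> z \<partial>count_space UNIV)"
      by (rule nn_integral_ge_point) simp
    finally show ?thesis using True by simp
  qed simp
  have "(\<integral>\<^sup>+z \<in> {z. \<forall>j. z $ j \<in> S j}. ennreal (\<Prod>j\<in>UNIV. f j (z $ j)) \<partial>\<mu>)
          \<le> (\<integral>\<^sup>+z. \<integral>\<^sup>+\<kappa>. F \<kappa> z \<partial>count_space UNIV \<partial>\<mu>)"
    by (intro nn_integral_mono dominated)
  also have "\<dots> = (\<integral>\<^sup>+\<kappa>. ennreal (\<Prod>j\<in>UNIV. c j (\<kappa> j)) * emeasure \<mu> (Q \<kappa>) \<partial>count_space UNIV)"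
  proof -
    have "(\<lambda>z. F \<kappa> z) \<in> borel_measurable \<mu>" for \<kappa>
      unfolding F_def by measurable
    moreover have "(\<integral>\<^sup>+z. F \<kappa> z \<partial>\<mu>) = ennreal (\<Prod>j\<in>UNIV. c j (\<kappa> j)) * emeasure \<mu> (Q \<kappa>)" for \<kappa>
      unfolding F_def by (rule nn_integral_cmult_indicator[OF Q])
    ultimately show ?thesis
      by (simp add: nn_integral_count_space_nn_integral)
  qed
  also have "\<dots> \<le> (\<integral>\<^sup>+\<kappa>. ennreal (\<Prod>j\<in>UNIV. c j (\<kappa> j))
                     * (carleson_norm r \<mu> * (\<Prod>j\<in>UNIV. ennreal (snd (center j (\<kappa> j)) powr r j)))
                   \<partial>count_space UNIV)"
    unfolding Q_def
    by (intro nn_integral_mono mult_left_mono emeasure_prod_cube_le_carleson_norm center) simp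
  also have "\<dots> = carleson_norm r \<mu> *
                   (\<integral>\<^sup>+\<kappa>. (\<Prod>j\<in>UNIV. ennreal (c j (\<kappa> j) * snd (center j (\<kappa> j)) powr r j))
                     \<partial>count_space UNIV)"
    using c by (simp add: nn_integral_cmult prod_ennreal[symmetric] ennreal_mult prod.distrib mult_ac)
  also have "\<dots> = carleson_norm r \<mu> *
                   (\<Prod>j\<in>UNIV. \<integral>\<^sup>+\<iota>. ennreal (c j \<iota> * snd (center j \<iota>) powr r j) \<partial>count_space UNIV)"
    by (simp add: nn_integral_count_space_prod[of "\<lambda>j \<iota>. ennreal (c j \<iota> * snd (center j \<iota>) powr r j)"])
  finally show ?thesis .
qed

lemma carleson_star_norm_le_carleson_norm:
  fixes r \<tau> :: "'m::finite \<Rightarrow> real" and \<mu> :: "('n::finite pt ^ 'm) measure"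
  assumes r: "\<And>j. real CARD('n) < r j" and \<tau>: "\<And>j. 0 < \<tau> j" and \<mu>: "sets \<mu> = sets borel"
  shows "carleson_star_norm r \<tau> \<mu>
           \<le> ennreal (\<Prod>j\<in>UNIV. dyadic_const ((r j + \<tau> j) / real CARD('n)) (r j) CARD('n))
              * carleson_norm r \<mu>"
proof -
  define q where "q j = (r j + \<tau> j) / real CARD('n)" for j
  have qn: "q j * real CARD('n) = r j + \<tau> j" for j
    unfolding q_def by simp
  have q: "1 < q j" for j
    using r[of j] \<tau>[of j] by (simp add: q_def field_simps)
  define C where "C = (\<Prod>j\<in>UNIV. dyadic_const (q j) (r j) CARD('n))"
  have "(\<integral>\<^sup>+ z \<in> {z. \<forall>j. z $ j \<in> Hw (w $ j)}.
           ennreal (\<Prod>j\<in>UNIV. star_kernel (r j) (\<tau> j) (w $ j) (z $ j)) \<partial>\<mu>)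
          \<le> ennreal C * carleson_norm r \<mu>" if w: "w \<in> upper_half_prod" for w
  proof -
    have s: "0 < snd (w $ j)" for j
      using w by (simp add: mem_upper_half_prod)
    have cover: "\<exists>\<iota>. x \<in> cube (dyadic_center (w $ j) (fst \<iota>) (snd \<iota>))
                   \<and> star_kernel (r j) (\<tau> j) (w $ j) x \<le> dyadic_bound (q j) (\<tau> j) (w $ j) (fst \<iota>) (snd \<iota>)"
      if x: "x \<in> Hw (w $ j)" for j x
    proof -
      obtain i k where "x \<in> cube (dyadic_center (w $ j) i k)"
        "\<And>l. max (snd (w $ j)) (dyadic_side (snd (w $ j)) i * (real (k l) + 1) / 8)
               \<le> norm (x - conj_pt (w $ j))"
        using dyadic_cube_cover[OF s x] by blast
      with star_kernel_le_dyadic_bound[OF s _ qn] q[of j] show ?thesis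
        by (intro exI[of _ "(i, k)"]) auto
    qed
    have "(\<integral>\<^sup>+ z \<in> {z. \<forall>j. z $ j \<in> Hw (w $ j)}.
             ennreal (\<Prod>j\<in>UNIV. star_kernel (r j) (\<tau> j) (w $ j) (z $ j)) \<partial>\<mu>)
            \<le> carleson_norm r \<mu> *
               (\<Prod>j\<in>UNIV. \<integral>\<^sup>+\<iota>. ennreal (dyadic_bound (q j) (\<tau> j) (w $ j) (fst \<iota>) (snd \<iota>)
                   * snd (dyadic_center (w $ j) (fst \<iota>) (snd \<iota>)) powr r j) \<partial>count_space UNIV)"
      using s by (intro nn_integral_prod_le_carleson_norm[OF \<mu>] cover dyadic_bound_nonneg star_kernel_nonneg)
                 (simp add: dyadic_center_def dyadic_side_def)
    also have "\<dots> \<le> carleson_norm r \<mu> * (\<Prod>j\<in>UNIV. ennreal (dyadic_const (q j) (r j) CARD('n)))"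
      using nn_integral_dyadic_le[OF s q qn r]
      by (intro mult_left_mono prod_mono_ennreal) (simp_all add: dyadic_center_def)
    also have "\<dots> = ennreal C * carleson_norm r \<mu>"
      using dyadic_const_nonneg[OF q r] by (simp add: C_def prod_ennreal mult.commute)
    finally show ?thesis .
  qed
  then show ?thesis
    unfolding carleson_star_norm_eq C_def q_def by (rule SUP_least)
qed

lemma snd_bounds_on_cube:
  assumes "z \<in> cube w"
  shows "snd w / 2 \<le> snd z" "snd z \<le> 3 * snd w / 2"
  using assms unfolding mem_cube abs_le_iff by linarith+

lemma cube_subset_Hw: "0 < snd w \<Longrightarrow> cube w \<subseteq> Hw w"
  using snd_bounds_on_cube[of _ w] by (fastforce simp: mem_Hw)

lemma norm_diff_conj_le_on_cube:
  fixes w z :: "'n::finite pt"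
  assumes s: "0 < snd w" and z: "z \<in> cube w"
  shows "norm (z - conj_pt w) \<le> (real CARD('n) + 3) * snd w"
proof -
  have "norm (fst z - fst w) \<le> (\<Sum>l\<in>UNIV. \<bar>(fst z - fst w) $ l\<bar>)"
    by (rule norm_le_l1_cart)
  also have "\<dots> \<le> real CARD('n) * (snd w / 2)"
    using sum_bounded_above[of UNIV "\<lambda>l. \<bar>(fst z - fst w) $ l\<bar>" "snd w / 2"] z
    by (simp add: mem_cube)
  finally have "norm (fst z - fst w) \<le> real CARD('n) * snd w / 2" by simp
  moreover have "\<bar>snd z + snd w\<bar> \<le> 5 * snd w / 2"
    using snd_bounds_on_cube[OF z] s by simp
  moreover have "norm (z - conj_pt w) \<le> norm (fst z - fst w) + \<bar>snd z + snd w\<bar>"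
    using norm_Pair_le[of "fst z - fst w" "snd z + snd w"] by (simp add: diff_conj_pt)
  moreover have "0 \<le> real CARD('n) * snd w"
    using s by simp
  moreover have "(real CARD('n) + 3) * snd w = real CARD('n) * snd w + 3 * snd w"
    by (simp add: algebra_simps)
  ultimately show ?thesis
    using s by linarith
qed

lemma star_kernel_ge_on_cube:
  fixes w z :: "'n::finite pt"
  assumes s: "0 < snd w" and z: "z \<in> cube w" and rt: "0 \<le> r + \<tau>"
  shows "snd w powr (- r) / (real CARD('n) + 3) powr (r + \<tau>) \<le> star_kernel r \<tau> w z"
proof -
  define A where "A = real CARD('n) + 3"
  have A: "0 < A" unfolding A_def by simp
  have "snd w \<le> norm (z - conj_pt w)"
    using snd_le_norm_diff_conj[of z w] snd_bounds_on_cube(1)[OF z] s by simp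
  then have D: "0 < norm (z - conj_pt w)"
    using s by linarith
  have "(A * snd w) powr (r + \<tau>) = A powr (r + \<tau>) * snd w powr r * snd w powr \<tau>"
    using A s by (simp add: powr_mult powr_add)
  then have "snd w powr (- r) / A powr (r + \<tau>) = snd w powr \<tau> / (A * snd w) powr (r + \<tau>)"
    using A s by (simp add: powr_minus_divide)
  also have "\<dots> \<le> star_kernel r \<tau> w z"
    unfolding star_kernel_def A_def
    using norm_diff_conj_le_on_cube[OF s z] D rt s
    by (intro divide_left_mono powr_mono2 mult_pos_pos) auto
  finally show ?thesis unfolding A_def .
qed

lemma emeasure_prod_cube_le_nn_integral:
  fixes \<mu> :: "('n::finite pt ^ 'm::finite) measure"
  assumes \<mu>: "sets \<mu> = sets borel"
    and sub: "\<And>j. cube (u j) \<subseteq> S j"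
    and c: "\<And>j. 0 \<le> c j"
    and f: "\<And>j x. x \<in> cube (u j) \<Longrightarrow> c j \<le> f j x"
  shows "ennreal (\<Prod>j\<in>UNIV. c j) * emeasure \<mu> {z. \<forall>j. z $ j \<in> cube (u j)}
           \<le> (\<integral>\<^sup>+z \<in> {z. \<forall>j. z $ j \<in> S j}. ennreal (\<Prod>j\<in>UNIV. f j (z $ j)) \<partial>\<mu>)"
proof -
  have "ennreal (\<Prod>j\<in>UNIV. c j) * indicator {z. \<forall>j. z $ j \<in> cube (u j)} z
          \<le> ennreal (\<Prod>j\<in>UNIV. f j (z $ j)) * indicator {z. \<forall>j. z $ j \<in> S j} z" for z
  proof (cases "\<forall>j. z $ j \<in> cube (u j)")
    case True
    then have "\<forall>j. z $ j \<in> S j" and "\<And>j. 0 \<le> c j \<and> c j \<le> f j (z $ j)"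
      using sub c f by blast+
    with True show ?thesis
      by (simp add: ennreal_leI prod_mono)
  qed simp
  then have "(\<integral>\<^sup>+z. ennreal (\<Prod>j\<in>UNIV. c j) * indicator {z. \<forall>j. z $ j \<in> cube (u j)} z \<partial>\<mu>)
               \<le> (\<integral>\<^sup>+z \<in> {z. \<forall>j. z $ j \<in> S j}. ennreal (\<Prod>j\<in>UNIV. f j (z $ j)) \<partial>\<mu>)"
    by (intro nn_integral_mono) (simp add: mult.commute)
  then show ?thesis
    by (simp add: nn_integral_cmult_indicator sets_prod_cube[OF \<mu>])
qed

lemma carleson_norm_le_carleson_star_norm:
  fixes r \<tau> :: "'m::finite \<Rightarrow> real" and \<mu> :: "('n::finite pt ^ 'm) measure"
  assumes rt: "\<And>j. 0 \<le> r j + \<tau> j" and \<mu>: "sets \<mu> = sets borel"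
  shows "carleson_norm r \<mu>
           \<le> ennreal (\<Prod>j\<in>UNIV. (real CARD('n) + 3) powr (r j + \<tau> j)) * carleson_star_norm r \<tau> \<mu>"
proof -
  define A where "A = real CARD('n) + 3"
  define C where "C = (\<Prod>j\<in>(UNIV::'m set). A powr (r j + \<tau> j))"
  have "emeasure \<mu> {z. \<forall>j. z $ j \<in> cube (w $ j)} / (\<Prod>j\<in>UNIV. ennreal (snd (w $ j) powr r j))
          \<le> ennreal C * carleson_star_norm r \<tau> \<mu>" if w: "w \<in> upper_half_prod" for w
  proof -
    have s: "0 < snd (w $ j)" for j
      using w by (simp add: mem_upper_half_prod)
    define c where "c j = snd (w $ j) powr (- r j) / A powr (r j + \<tau> j)" for j
    define P where "P = (\<Prod>j\<in>UNIV. snd (w $ j) powr r j)"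
    have P: "0 < P"
      unfolding P_def using s by (intro prod_pos) (simp add: less_imp_neq[symmetric])
    have "A powr (r j + \<tau> j) * c j = 1 / snd (w $ j) powr r j" for j
      by (simp add: c_def A_def powr_minus_divide)
    then have "C * (\<Prod>j\<in>UNIV. c j) = 1 / P"
      by (simp add: C_def P_def prod_dividef flip: prod.distrib)
    moreover have "0 \<le> C" "0 \<le> (\<Prod>j\<in>UNIV. c j)"
      by (simp_all add: C_def c_def prod_nonneg)
    ultimately have "ennreal C * ennreal (\<Prod>j\<in>UNIV. c j) = inverse (ennreal P)"
      using P by (simp add: inverse_ennreal inverse_eq_divide flip: ennreal_mult)
    then have "emeasure \<mu> {z. \<forall>j. z $ j \<in> cube (w $ j)} / (\<Prod>j\<in>UNIV. ennreal (snd (w $ j) powr r j))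
                 = ennreal C * (ennreal (\<Prod>j\<in>UNIV. c j) * emeasure \<mu> {z. \<forall>j. z $ j \<in> cube (w $ j)})"
      by (simp add: P_def prod_ennreal divide_ennreal_def mult.commute flip: mult.assoc)
    also have "\<dots> \<le> ennreal C * (\<integral>\<^sup>+ z \<in> {z. \<forall>j. z $ j \<in> Hw (w $ j)}.
                       ennreal (\<Prod>j\<in>UNIV. star_kernel (r j) (\<tau> j) (w $ j) (z $ j)) \<partial>\<mu>)"
      using s rt
      by (intro mult_left_mono emeasure_prod_cube_le_nn_integral[OF \<mu>] cube_subset_Hw)
         (auto simp: c_def A_def intro: star_kernel_ge_on_cube)
    also have "\<dots> \<le> ennreal C * carleson_star_norm r \<tau> \<mu>"
      unfolding carleson_star_norm_eq using w by (intro mult_left_mono SUP_upper) auto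
    finally show ?thesis .
  qed
  then show ?thesis
    unfolding carleson_norm_def C_def A_def by (rule SUP_least)
qed

lemma less_top_iff_of_mutual_bounds:
  fixes a b :: ennreal
  assumes "a \<le> ennreal C * b" and "b \<le> ennreal C * a"
  shows "a < \<infinity> \<longleftrightarrow> b < \<infinity>"
  using assms le_less_trans[of a "ennreal C * b" \<infinity>] le_less_trans[of b "ennreal C * a" \<infinity>]
  by (auto simp: ennreal_mult_less_top)

theorem mainTheorem9:
  fixes r \<tau> :: "'m::finite \<Rightarrow> real"
  assumes "\<And>j. r j > real CARD('n::finite)"
      and "\<And>j. \<tau> j > 0"
  shows "\<exists>C>0. \<forall>\<mu> :: ('n pt ^ 'm) measure. borel_measure_on_Hm \<mu> \<longrightarrow>
           ((carleson_norm r \<mu> < \<infinity> \<longleftrightarrow> carleson_star_norm r \<tau> \<mu> < \<infinity>)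
            \<and> carleson_norm r \<mu> \<le> ennreal C * carleson_star_norm r \<tau> \<mu>
            \<and> carleson_star_norm r \<tau> \<mu> \<le> ennreal C * carleson_norm r \<mu>)"
proof -
  define C1 where "C1 = (\<Prod>j\<in>(UNIV::'m set). (real CARD('n) + 3) powr (r j + \<tau> j))"
  define C2 where "C2 = (\<Prod>j\<in>(UNIV::'m set). dyadic_const ((r j + \<tau> j) / real CARD('n)) (r j) CARD('n))"
  define C where "C = max 1 (max C1 C2)"
  have rt: "0 \<le> r j + \<tau> j" for j
    using assms(1)[of j] assms(2)[of j] by linarith
  have bounds: "carleson_norm r \<mu> \<le> ennreal C * carleson_star_norm r \<tau> \<mu>
        \<and> carleson_star_norm r \<tau> \<mu> \<le> ennreal C * carleson_norm r \<mu>"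
    if "borel_measure_on_Hm \<mu>" for \<mu> :: "('n pt ^ 'm) measure"
  proof -
    have \<mu>: "sets \<mu> = sets borel"
      using that by (simp add: borel_measure_on_Hm_def)
    have "carleson_norm r \<mu> \<le> ennreal C1 * carleson_star_norm r \<tau> \<mu>"
      unfolding C1_def by (rule carleson_norm_le_carleson_star_norm[OF rt \<mu>])
    then have "carleson_norm r \<mu> \<le> ennreal C * carleson_star_norm r \<tau> \<mu>"
      by (rule order.trans) (intro mult_right_mono ennreal_leI, simp_all add: C_def)
    moreover have "carleson_star_norm r \<tau> \<mu> \<le> ennreal C2 * carleson_norm r \<mu>"
      unfolding C2_def by (rule carleson_star_norm_le_carleson_norm[OF assms \<mu>])
    then have "carleson_star_norm r \<tau> \<mu> \<le> ennreal C * carleson_norm r \<mu>"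
      by (rule order.trans) (intro mult_right_mono ennreal_leI, simp_all add: C_def)
    ultimately show ?thesis ..
  qed
  moreover have "0 < C"
    by (simp add: C_def)
  ultimately show ?thesis
    by (metis less_top_iff_of_mutual_bounds)
qed

end
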